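(* Let $U$ be a uniformly convex Banach space satisfying Opial's condition, and let $Q\subseteq U$ be a closed, convex, bounded set. Let $r>0$ and let $\{\beta_n\}_n$ be a sequence of positive real numbers with $\lim_{n\to\infty}\beta_n=1$. Suppose $T:Q\to Q$ satisfies: for all $p,q\in Q$ with $\|p-q\|<r$, $\|T^np-T^nq\|\leq\beta_n\|p-q\|$ for every $n\in\mathbb{N}$. Let $\{q_n\}_n$ be a sequence in $Q$ converging weakly to some $w$ with $q_n-Tq_n\to 0$. If the asymptotic radius of $\{q_n\}_n$ relative to $Q$ is less than $r$, then $w$ is a fixed point of $T$.
   Context: Opial's condition (as defined in the paper): for every sequence $\{x_n\}_n$ in $U$ converging weakly to $x\in U$ and every $p\in U$ with $p\neq x$, one has $\limsup_{n\to\infty}\|x_n-x\|\leq\limsup_{n\to\infty}\|x_n-p\|$. For a bounded sequence $\{x_n\}_n$ in $U$, its asymptotic radius relative to $Q$ is $\inf_{y\in Q}\limsup_{n\to\infty}\|x_n-y\|$. *)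

theory Defs
  imports "HOL-Analysis.Analysis"
begin

definition weakly_converges :: "(nat \<Rightarrow> 'a::real_normed_vector) \<Rightarrow> 'a \<Rightarrow> bool" where
  "weakly_converges x l \<longleftrightarrow>
     (\<forall>f :: 'a \<Rightarrow> real. bounded_linear f \<longrightarrow> (\<lambda>n. f (x n)) \<longlonglongrightarrow> f l)"

definition uniformly_convex_space :: "'a::real_normed_vector itself \<Rightarrow> bool" where
  "uniformly_convex_space _ \<longleftrightarrow>
     (\<forall>e>0. \<exists>d>0. \<forall>x y :: 'a. norm x \<le> 1 \<and> norm y \<le> 1 \<and> norm (x - y) \<ge> e
        \<longrightarrow> norm ((1/2) *\<^sub>R (x + y)) \<le> 1 - d)"

definition opial_condition :: "'a::real_normed_vector itself \<Rightarrow> bool" where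
  "opial_condition _ \<longleftrightarrow>
     (\<forall>(x :: nat \<Rightarrow> 'a) l p. weakly_converges x l \<and> p \<noteq> l \<longrightarrow>
        limsup (\<lambda>n. ereal (norm (x n - l))) \<le> limsup (\<lambda>n. ereal (norm (x n - p))))"

definition asymptotic_radius :: "(nat \<Rightarrow> 'a::real_normed_vector) \<Rightarrow> 'a set \<Rightarrow> ereal" where
  "asymptotic_radius x Q = (INF y\<in>Q. limsup (\<lambda>n. ereal (norm (x n - y))))"

end

theory Submission
  imports Defs
begin

text \<open>By Opial's condition the weak limit \<open>w\<close> minimises the asymptotic distance
\<open>f y = limsup \<parallel>q\<^sub>n - y\<parallel>\<close>, and \<open>w \<in> Q\<close> because closed convex sets are weakly closed
(Hahn--Banach). As \<open>q\<^sub>n - T\<^sup>m q\<^sub>n \<rightarrow> 0\<close> for every \<open>m\<close>, the local Lipschitz bound gives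
\<open>f (T\<^sup>m w) \<le> \<beta>\<^sub>m f w\<close>, so \<open>T\<^sup>m w\<close> is a minimising sequence of \<open>f\<close>. In a uniformly
convex space minimising sequences converge to the minimiser (a far-away point would produce a
midpoint with smaller asymptotic distance), hence \<open>T\<^sup>m w \<rightarrow> w\<close>, and continuity of \<open>T\<close>
yields \<open>T w = w\<close>.\<close>

definition sublinear :: "('a::real_vector \<Rightarrow> real) \<Rightarrow> bool" where
  "sublinear p \<longleftrightarrow> (\<forall>x y. p (x + y) \<le> p x + p y) \<and> (\<forall>c x. 0 < c \<longrightarrow> p (c *\<^sub>R x) = c * p x)"

lemma sublinearI:
  assumes add: "\<And>x y. p (x + y) \<le> p x + p y"
    and scale: "\<And>c x. 0 < c \<Longrightarrow> p (c *\<^sub>R x) \<le> c * p x"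
  shows "sublinear p"
  unfolding sublinear_def
proof (intro conjI allI impI add antisym scale)
  fix c :: real and x assume c: "0 < c"
  have "p x = p ((1 / c) *\<^sub>R (c *\<^sub>R x))" using c by simp
  also have "\<dots> \<le> (1 / c) * p (c *\<^sub>R x)" using c by (intro scale) simp
  finally show "c * p x \<le> p (c *\<^sub>R x)" using c by (simp add: field_simps)
qed

lemma sublinear_add: "sublinear p \<Longrightarrow> p (x + y) \<le> p x + p y"
  by (simp add: sublinear_def)

lemma sublinear_scale: "sublinear p \<Longrightarrow> 0 < c \<Longrightarrow> p (c *\<^sub>R x) = c * p x"
  by (simp add: sublinear_def)

lemma sublinear_zero: "sublinear p \<Longrightarrow> p 0 = 0"
  using sublinear_scale[of p 2 0] by simp

text \<open>Partial linear functionals below \<open>p\<close> are encoded by their graphs, so that extending a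
functional is enlarging a set and Zorn's lemma applies to inclusion.\<close>

definition dominated_graph :: "('a::real_vector \<Rightarrow> real) \<Rightarrow> ('a \<times> real) set \<Rightarrow> bool" where
  "dominated_graph p G \<longleftrightarrow> subspace G \<and> (\<forall>(x, t)\<in>G. t \<le> p x)"

lemma dominated_graph_unique:
  assumes p: "sublinear p" and G: "dominated_graph p G" and "(x, t) \<in> G" "(x, t') \<in> G"
  shows "t = t'"
proof -
  have "(0, t - t') \<in> G" and "(0, t' - t) \<in> G"
    using G assms(3,4) subspace_diff[of G] unfolding dominated_graph_def by force+
  then have "t - t' \<le> p 0" and "t' - t \<le> p 0"
    using G unfolding dominated_graph_def by blast+
  then show ?thesis using sublinear_zero[OF p] by linarith
qed

lemma dominated_graph_Union_chain:
  assumes "C \<noteq> {}" "subset.chain {G. dominated_graph p G} C"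
  shows "dominated_graph p (\<Union>C)"
proof -
  have dom: "\<And>G. G \<in> C \<Longrightarrow> dominated_graph p G"
    and chain: "\<And>G H. G \<in> C \<Longrightarrow> H \<in> C \<Longrightarrow> G \<subseteq> H \<or> H \<subseteq> G"
    using assms(2) by (auto simp: subset_chain_def)
  have "subspace (\<Union>C)"
  proof (rule subspaceI)
    show "0 \<in> \<Union>C"
      using assms(1) dom subspace_0 unfolding dominated_graph_def by blast
  next
    fix u v assume "u \<in> \<Union>C" "v \<in> \<Union>C"
    then obtain G H where "G \<in> C" "H \<in> C" "u \<in> G" "v \<in> H" by blast
    with chain[of G H] dom show "u + v \<in> \<Union>C"
      unfolding dominated_graph_def by (metis UnionI subsetD subspace_add)
  next
    fix c :: real and u assume "u \<in> \<Union>C"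
    with dom show "c *\<^sub>R u \<in> \<Union>C"
      unfolding dominated_graph_def by (metis UnionE UnionI subspace_scale)
  qed
  with dom show ?thesis unfolding dominated_graph_def by blast
qed

lemma dominated_graph_extend:
  assumes p: "sublinear p" and G: "dominated_graph p G"
  shows "\<exists>c. dominated_graph p (span (insert (x, c) G))"
proof -
  have G_sub: "subspace G" and G_le: "\<And>y t. (y, t) \<in> G \<Longrightarrow> t \<le> p y"
    using G unfolding dominated_graph_def by auto
  have span_G: "span G = G" using G_sub by simp
  have gap: "t1 - p (y1 - x) \<le> p (y2 + x) - t2" if "(y1, t1) \<in> G" "(y2, t2) \<in> G" for y1 t1 y2 t2
  proof -
    have "t1 + t2 \<le> p (y1 + y2)"
      using G_le subspace_add[OF G_sub that] by simp
    also have "\<dots> = p ((y1 - x) + (y2 + x))" by (simp add: algebra_simps)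
    also have "\<dots> \<le> p (y1 - x) + p (y2 + x)" by (rule sublinear_add[OF p])
    finally show ?thesis by linarith
  qed
  \<comment> \<open>\<open>(x, c)\<close> may be added iff \<open>t - p (y - x) \<le> c \<le> p (y + x) - t\<close> for all \<open>(y, t) \<in> G\<close>;
     \<open>gap\<close> shows that such \<open>c\<close> exist\<close>
  define S where "S = {t - p (y - x) | y t. (y, t) \<in> G}"
  define c where "c = Sup S"
  have "(0, 0) \<in> G" using subspace_0[OF G_sub] by (simp add: zero_prod_def)
  then have S_ne: "S \<noteq> {}" and S_bdd: "bdd_above S"
    unfolding S_def bdd_above_def using gap by blast+
  have c_ge: "t - p (y - x) \<le> c" if "(y, t) \<in> G" for y t
    unfolding c_def using that S_bdd by (intro cSup_upper) (auto simp: S_def)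
  have c_le: "c \<le> p (y + x) - t" if "(y, t) \<in> G" for y t
    unfolding c_def using that gap by (intro cSup_least[OF S_ne]) (auto simp: S_def)
  have "t \<le> p a" if span: "(a, t) \<in> span (insert (x, c) G)" for a t
  proof -
    obtain s where in_G: "(a - s *\<^sub>R x, t - s * c) \<in> G"
      using span by (auto simp: span_insert span_G)
    consider "s = 0" | "0 < s" | "s < 0" by linarith
    then show ?thesis
    proof cases
      case 1
      then show ?thesis using G_le in_G by simp
    next
      case 2
      have "((1 / s) *\<^sub>R a - x, t / s - c) \<in> G"
        using subspace_scale[OF G_sub in_G, of "1 / s"] 2 by (simp add: algebra_simps)
      from c_le[OF this] have "t / s \<le> p ((1 / s) *\<^sub>R a)" by simp
      then show ?thesis using 2 sublinear_scale[OF p, of "1 / s" a] by (simp add: field_simps)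
    next
      case 3
      have "((-1 / s) *\<^sub>R a + x, - t / s + c) \<in> G"
        using subspace_scale[OF G_sub in_G, of "-1 / s"] 3 by (simp add: algebra_simps)
      from c_ge[OF this] have "- t / s \<le> p ((-1 / s) *\<^sub>R a)" by simp
      then show ?thesis using 3 sublinear_scale[OF p, of "-1 / s" a] by (simp add: field_simps)
    qed
  qed
  then show ?thesis unfolding dominated_graph_def by auto
qed

theorem Hahn_Banach_sublinear:
  fixes p :: "'a::real_vector \<Rightarrow> real"
  assumes p: "sublinear p"
  obtains F where "linear F" "\<And>x. F x \<le> p x"
proof -
  have "subspace {0 :: 'a \<times> real}" by simp
  then have "dominated_graph p {0}"
    using sublinear_zero[OF p] by (auto simp: dominated_graph_def zero_prod_def)
  then obtain M where M: "dominated_graph p M"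
    and M_max: "\<And>G. dominated_graph p G \<Longrightarrow> M \<subseteq> G \<Longrightarrow> G = M"
    using subset_Zorn_nonempty[of "{G. dominated_graph p G}"] dominated_graph_Union_chain
    by (metis (no_types, lifting) empty_iff mem_Collect_eq)
  have total: "\<exists>t. (x, t) \<in> M" for x
  proof -
    obtain c where "dominated_graph p (span (insert (x, c) M))"
      using dominated_graph_extend[OF p M] by blast
    moreover have "M \<subseteq> span (insert (x, c) M)"
      by (meson order_trans span_superset subset_insertI)
    ultimately have "span (insert (x, c) M) = M" by (rule M_max)
    then show ?thesis using span_superset by blast
  qed
  define F where "F x = (THE t. (x, t) \<in> M)" for x
  have graph: "(x, F x) \<in> M" for x
    unfolding F_def using total dominated_graph_unique[OF p M] by (metis theI)
  have M_sub: "subspace M" using M by (simp add: dominated_graph_def)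
  have "linear F"
  proof (rule linearI)
    fix x y
    show "F (x + y) = F x + F y"
      using subspace_add[OF M_sub graph graph] dominated_graph_unique[OF p M graph] by simp
  next
    fix c :: real and x
    show "F (c *\<^sub>R x) = c *\<^sub>R F x"
      using subspace_scale[OF M_sub graph] dominated_graph_unique[OF p M graph] by simp
  qed
  moreover have "F x \<le> p x" for x
    using M graph unfolding dominated_graph_def by blast
  ultimately show thesis by (rule that)
qed

lemma convex_cone_combination:
  assumes "convex Q" "z1 \<in> Q" "z2 \<in> Q" "0 \<le> s1" "0 \<le> s2"
  obtains z where "z \<in> Q" "(s1 + s2) *\<^sub>R (z - w) = s1 *\<^sub>R (z1 - w) + s2 *\<^sub>R (z2 - w)"
proof (cases "s1 + s2 = 0")
  case True
  with assms(4,5) have "s1 = 0" "s2 = 0" by simp_all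
  with assms(2) show thesis by (intro that[of z1]) simp_all
next
  case False
  define z where "z = (s1 / (s1 + s2)) *\<^sub>R z1 + (s2 / (s1 + s2)) *\<^sub>R z2"
  have "z \<in> Q"
    unfolding z_def using assms False
    by (intro convexD[OF assms(1-3)]) (simp_all flip: add_divide_distrib)
  have "(s1 + s2) *\<^sub>R z = s1 *\<^sub>R z1 + s2 *\<^sub>R z2"
    using False by (simp add: z_def scaleR_add_right)
  then have "(s1 + s2) *\<^sub>R (z - w) = s1 *\<^sub>R (z1 - w) + s2 *\<^sub>R (z2 - w)"
    by (simp add: scaleR_diff_right scaleR_add_left)
  with \<open>z \<in> Q\<close> show thesis by (rule that)
qed

text \<open>For \<open>p = separating_gauge Q w d\<close>, taking \<open>s = 0\<close>, resp. \<open>s = 1\<close>, in the infimum gives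
\<open>p y \<le> \<parallel>y\<parallel>\<close> and \<open>p (z - w) \<le> -d\<close> for \<open>z \<in> Q\<close>, so a linear functional below \<open>p\<close> is bounded
and separates \<open>w\<close> from \<open>Q\<close>. The condition \<open>d \<le> dist w Q\<close> keeps the infimum finite.\<close>

definition separating_gauge :: "'a::real_normed_vector set \<Rightarrow> 'a \<Rightarrow> real \<Rightarrow> 'a \<Rightarrow> real" where
  "separating_gauge Q w d y = Inf {norm (y - s *\<^sub>R (z - w)) - s * d | s z. 0 \<le> s \<and> z \<in> Q}"

context
  fixes Q :: "'a::real_normed_vector set" and w :: 'a and d :: real
  assumes Q_ne: "Q \<noteq> {}" and d_le: "\<And>z. z \<in> Q \<Longrightarrow> d \<le> norm (z - w)"
begin

lemma separating_gauge_le: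
  assumes "0 \<le> s" "z \<in> Q"
  shows "separating_gauge Q w d y \<le> norm (y - s *\<^sub>R (z - w)) - s * d"
proof -
  have "- norm y \<le> norm (y - s *\<^sub>R (z - w)) - s * d" if "0 \<le> s" "z \<in> Q" for s z
  proof -
    have "s * d \<le> norm (s *\<^sub>R (z - w))"
      using d_le[OF that(2)] that(1) by (simp add: mult_left_mono)
    also have "\<dots> \<le> norm (y - s *\<^sub>R (z - w)) + norm y"
      by (metis add.commute norm_minus_commute norm_triangle_sub)
    finally show ?thesis by linarith
  qed
  then have "bdd_below {norm (y - s *\<^sub>R (z - w)) - s * d | s z. 0 \<le> s \<and> z \<in> Q}"
    by (auto simp: bdd_below_def)
  then show ?thesis
    unfolding separating_gauge_def using assms by (intro cInf_lower) auto
qed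

lemma separating_gauge_greatest:
  assumes "\<And>s z. 0 \<le> s \<Longrightarrow> z \<in> Q \<Longrightarrow> c \<le> norm (y - s *\<^sub>R (z - w)) - s * d"
  shows "c \<le> separating_gauge Q w d y"
proof -
  obtain z where "z \<in> Q" using Q_ne by blast
  then have "norm (y - 0 *\<^sub>R (z - w)) - 0 * d \<in> {norm (y - s *\<^sub>R (z - w)) - s * d | s z. 0 \<le> s \<and> z \<in> Q}"
    by blast
  then show ?thesis
    unfolding separating_gauge_def using assms by (intro cInf_greatest) auto
qed

lemma separating_gauge_le_norm: "separating_gauge Q w d y \<le> norm y"
proof -
  obtain z where "z \<in> Q" using Q_ne by blast
  then show ?thesis using separating_gauge_le[of 0 z y] by simp
qed

lemma separating_gauge_le_neg: "z \<in> Q \<Longrightarrow> separating_gauge Q w d (z - w) \<le> - d"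
  using separating_gauge_le[of 1 z "z - w"] by simp

lemma separating_gauge_add:
  assumes "convex Q"
  shows "separating_gauge Q w d (x + y) \<le> separating_gauge Q w d x + separating_gauge Q w d y"
proof -
  let ?p = "separating_gauge Q w d"
  have both: "?p (x + y) \<le> (norm (x - s1 *\<^sub>R (z1 - w)) - s1 * d) + (norm (y - s2 *\<^sub>R (z2 - w)) - s2 * d)"
    if hyps: "0 \<le> s1" "z1 \<in> Q" "0 \<le> s2" "z2 \<in> Q" for s1 z1 s2 z2
  proof -
    obtain z where "z \<in> Q" and z: "(s1 + s2) *\<^sub>R (z - w) = s1 *\<^sub>R (z1 - w) + s2 *\<^sub>R (z2 - w)"
      using convex_cone_combination[OF assms hyps(2,4,1,3)] .
    have "?p (x + y) \<le> norm (x + y - (s1 + s2) *\<^sub>R (z - w)) - (s1 + s2) * d"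
      using separating_gauge_le[OF _ \<open>z \<in> Q\<close>] hyps by simp
    also have "x + y - (s1 + s2) *\<^sub>R (z - w) = (x - s1 *\<^sub>R (z1 - w)) + (y - s2 *\<^sub>R (z2 - w))"
      unfolding z by (simp add: algebra_simps)
    finally show ?thesis
      using norm_triangle_ineq[of "x - s1 *\<^sub>R (z1 - w)" "y - s2 *\<^sub>R (z2 - w)"]
      by (simp add: algebra_simps)
  qed
  have left: "?p (x + y) - (norm (y - s2 *\<^sub>R (z2 - w)) - s2 * d) \<le> ?p x"
    if "0 \<le> s2" "z2 \<in> Q" for s2 z2
  proof (rule separating_gauge_greatest)
    fix s1 :: real and z1 assume "0 \<le> s1" "z1 \<in> Q"
    from both[OF this that] show "?p (x + y) - (norm (y - s2 *\<^sub>R (z2 - w)) - s2 * d)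
      \<le> norm (x - s1 *\<^sub>R (z1 - w)) - s1 * d" by linarith
  qed
  have "?p (x + y) - ?p x \<le> ?p y"
  proof (rule separating_gauge_greatest)
    fix s2 :: real and z2 assume "0 \<le> s2" "z2 \<in> Q"
    from left[OF this] show "?p (x + y) - ?p x \<le> norm (y - s2 *\<^sub>R (z2 - w)) - s2 * d"
      by linarith
  qed
  then show ?thesis by simp
qed

lemma separating_gauge_scale:
  assumes "0 < c"
  shows "separating_gauge Q w d (c *\<^sub>R x) \<le> c * separating_gauge Q w d x"
proof -
  let ?p = "separating_gauge Q w d"
  have "?p (c *\<^sub>R x) / c \<le> norm (x - s *\<^sub>R (z - w)) - s * d" if "0 \<le> s" "z \<in> Q" for s z
  proof -
    have "?p (c *\<^sub>R x) \<le> norm (c *\<^sub>R x - (c * s) *\<^sub>R (z - w)) - (c * s) * d"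
      using separating_gauge_le that assms by simp
    also have "c *\<^sub>R x - (c * s) *\<^sub>R (z - w) = c *\<^sub>R (x - s *\<^sub>R (z - w))"
      by (simp add: scaleR_right_diff_distrib)
    also have "norm (c *\<^sub>R (x - s *\<^sub>R (z - w))) - (c * s) * d = c * (norm (x - s *\<^sub>R (z - w)) - s * d)"
      using assms by (simp add: right_diff_distrib)
    finally show ?thesis using assms by (simp add: field_simps)
  qed
  then have "?p (c *\<^sub>R x) / c \<le> ?p x" by (rule separating_gauge_greatest)
  then show ?thesis using assms by (simp add: field_simps)
qed

lemma sublinear_separating_gauge: "convex Q \<Longrightarrow> sublinear (separating_gauge Q w d)"
  by (intro sublinearI separating_gauge_add separating_gauge_scale)

end

lemma closed_convex_separation:
  fixes Q :: "'a::real_normed_vector set"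
  assumes "closed Q" "convex Q" "w \<notin> Q"
  obtains F :: "'a \<Rightarrow> real" and d :: real
  where "bounded_linear F" "0 < d" "\<And>z. z \<in> Q \<Longrightarrow> F z + d \<le> F w"
proof (cases "Q = {}")
  case True
  then show thesis using that[of "\<lambda>_. 0" 1] by simp
next
  case False
  define d where "d = infdist w Q"
  have "d \<noteq> 0"
    using assms(1,3) False in_closed_iff_infdist_zero unfolding d_def by blast
  then have "0 < d" using infdist_nonneg[of w Q] unfolding d_def by linarith
  have d_le: "d \<le> norm (z - w)" if "z \<in> Q" for z
    using infdist_le[OF that, of w] by (simp add: d_def dist_norm norm_minus_commute)
  let ?p = "separating_gauge Q w d"
  obtain F where F: "linear F" and F_le: "\<And>x. F x \<le> ?p x"
    using Hahn_Banach_sublinear sublinear_separating_gauge[OF False d_le assms(2)] by blast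
  have "norm (F x) \<le> norm x * 1" for x
  proof -
    have "F x \<le> norm x"
      using F_le[of x] separating_gauge_le_norm[OF False d_le, of x] by linarith
    moreover have "- F x \<le> norm x"
      using F_le[of "- x"] separating_gauge_le_norm[OF False d_le, of "- x"] linear_neg[OF F, of x]
      by simp
    ultimately show ?thesis by simp
  qed
  then have "bounded_linear F"
    using F by (intro bounded_linear_intro[where K=1]) (auto simp: linear_add linear_scale)
  moreover have "F z + d \<le> F w" if "z \<in> Q" for z
    using F_le[of "z - w"] separating_gauge_le_neg[OF False d_le that] linear_diff[OF F, of z w]
    by simp
  ultimately show thesis using \<open>0 < d\<close> that by blast
qed

lemma weak_limit_in_closed_convex:
  fixes Q :: "'a::real_normed_vector set"
  assumes "closed Q" "convex Q" "\<And>n. x n \<in> Q" "weakly_converges x w"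
  shows "w \<in> Q"
proof (rule ccontr)
  assume "w \<notin> Q"
  then obtain F :: "'a \<Rightarrow> real" and d where F: "bounded_linear F" and "0 < d"
    and sep: "\<And>z. z \<in> Q \<Longrightarrow> F z + d \<le> F w"
    using closed_convex_separation[OF assms(1,2)] by blast
  have "(\<lambda>n. F (x n)) \<longlonglongrightarrow> F w"
    using assms(4) F unfolding weakly_converges_def by blast
  moreover have "\<forall>\<^sub>F n in sequentially. F (x n) \<le> F w - d"
    using sep[OF assms(3)] by (simp add: algebra_simps)
  ultimately have "F w \<le> F w - d" by (intro tendsto_upperbound) auto
  with \<open>0 < d\<close> show False by simp
qed

lemma uniformly_convex_midpoint:
  fixes R \<epsilon> :: real
  assumes uc: "uniformly_convex_space TYPE('a::real_normed_vector)" and "0 \<le> R" "0 < \<epsilon>"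
  obtains \<eta> where "0 < \<eta>"
    "\<And>x y z :: 'a. \<epsilon> \<le> norm (x - y) \<Longrightarrow> norm (z - x) \<le> R + \<eta> \<Longrightarrow> norm (z - y) \<le> R + \<eta> \<Longrightarrow>
       norm (z - midpoint x y) \<le> R - \<eta>"
proof (cases "R = 0")
  case True
  \<comment> \<open>the hypotheses are then contradictory for \<open>\<eta> = \<epsilon> / 4\<close>\<close>
  have "norm (x - y) < \<epsilon>" if "norm (z - x) \<le> R + \<epsilon> / 4" "norm (z - y) \<le> R + \<epsilon> / 4" for x y z :: 'a
    using that True norm_triangle_ineq[of "x - z" "z - y"] \<open>0 < \<epsilon>\<close>
    by (simp add: norm_minus_commute)
  then show thesis using \<open>0 < \<epsilon>\<close> by (intro that[of "\<epsilon> / 4"]) force+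
next
  case False
  with \<open>0 \<le> R\<close> have "0 < R" by simp
  obtain \<delta> where "0 < \<delta>" and \<delta>: "\<And>a b :: 'a. norm a \<le> 1 \<Longrightarrow> norm b \<le> 1 \<Longrightarrow>
      \<epsilon> / (R + 1) \<le> norm (a - b) \<Longrightarrow> norm ((1/2) *\<^sub>R (a + b)) \<le> 1 - \<delta>"
    using uc \<open>0 < R\<close> \<open>0 < \<epsilon>\<close> unfolding uniformly_convex_space_def
    by (metis add_pos_pos divide_pos_pos zero_less_one)
  define \<eta> where "\<eta> = min 1 (R * \<delta> / 2)"
  have \<eta>: "0 < \<eta>" "\<eta> \<le> 1" "\<eta> \<le> R * \<delta> / 2"
    using \<open>0 < R\<close> \<open>0 < \<delta>\<close> by (auto simp: \<eta>_def)
  show thesis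
  proof (rule that[OF \<open>0 < \<eta>\<close>])
    fix x y z :: 'a
    assume far: "\<epsilon> \<le> norm (x - y)" and near: "norm (z - x) \<le> R + \<eta>" "norm (z - y) \<le> R + \<eta>"
    define L where "L = R + \<eta>"
    have "0 < L" "L \<le> R + 1" using \<open>0 < R\<close> \<eta> by (auto simp: L_def)
    have "norm ((1/2) *\<^sub>R ((1 / L) *\<^sub>R (z - x) + (1 / L) *\<^sub>R (z - y))) \<le> 1 - \<delta>"
    proof (rule \<delta>)
      show "norm ((1 / L) *\<^sub>R (z - x)) \<le> 1" "norm ((1 / L) *\<^sub>R (z - y)) \<le> 1"
        using near \<open>0 < L\<close> by (simp_all add: L_def divide_le_eq)
      have "\<epsilon> / (R + 1) \<le> norm (x - y) / L"
        using far \<open>0 < L\<close> \<open>L \<le> R + 1\<close> \<open>0 < \<epsilon>\<close> by (intro frac_le) auto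
      also have "\<dots> = norm ((1 / L) *\<^sub>R (z - x) - (1 / L) *\<^sub>R (z - y))"
        using \<open>0 < L\<close> by (simp add: norm_minus_commute flip: scaleR_diff_right)
      finally show "\<epsilon> / (R + 1) \<le> norm ((1 / L) *\<^sub>R (z - x) - (1 / L) *\<^sub>R (z - y))" .
    qed
    also have "(1/2) *\<^sub>R ((1 / L) *\<^sub>R (z - x) + (1 / L) *\<^sub>R (z - y)) = (1 / L) *\<^sub>R (z - midpoint x y)"
      by (simp add: midpoint_def algebra_simps flip: scaleR_2)
    finally have "\<bar>1 / L\<bar> * norm (z - midpoint x y) \<le> 1 - \<delta>"
      by (simp only: norm_scaleR)
    then have "norm (z - midpoint x y) \<le> L * (1 - \<delta>)"
      using \<open>0 < L\<close> by (simp add: field_simps)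
    also have "\<dots> \<le> R - \<eta>"
      using \<eta> \<open>0 < \<delta>\<close> by (simp add: L_def algebra_simps)
        (use mult_pos_pos[OF \<open>0 < \<delta>\<close> \<open>0 < \<eta>\<close>] in linarith)
    finally show "norm (z - midpoint x y) \<le> R - \<eta>" .
  qed
qed

definition asymptotic_distance :: "(nat \<Rightarrow> 'a::real_normed_vector) \<Rightarrow> 'a \<Rightarrow> ereal" where
  "asymptotic_distance x y = limsup (\<lambda>n. ereal (norm (x n - y)))"

lemma asymptotic_radius_eq_INF: "asymptotic_radius x Q = (INF y\<in>Q. asymptotic_distance x y)"
  by (simp add: asymptotic_radius_def asymptotic_distance_def)

lemma asymptotic_distance_nonneg: "0 \<le> asymptotic_distance x y"
  unfolding asymptotic_distance_def by (rule le_Limsup) auto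

lemma asymptotic_distance_le:
  "eventually (\<lambda>n. norm (x n - y) \<le> c) sequentially \<Longrightarrow> asymptotic_distance x y \<le> ereal c"
  unfolding asymptotic_distance_def by (rule Limsup_bounded) (auto elim: eventually_mono)

lemma asymptotic_distance_lessD:
  "asymptotic_distance x y < ereal c \<Longrightarrow> eventually (\<lambda>n. norm (x n - y) < c) sequentially"
  unfolding asymptotic_distance_def by (drule Limsup_lessD) simp

lemma opial_asymptotic_center:
  assumes "opial_condition TYPE('a::real_normed_vector)" "weakly_converges x (w :: 'a)"
  shows "asymptotic_distance x w \<le> asymptotic_distance x y"
  using assms unfolding opial_condition_def asymptotic_distance_def by (cases "y = w") auto

lemma tendsto_asymptotic_center:
  fixes x y :: "nat \<Rightarrow> 'a::real_normed_vector"
  assumes uc: "uniformly_convex_space TYPE('a)"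
    and center: "\<And>z. asymptotic_distance x w \<le> asymptotic_distance x z"
    and finite: "asymptotic_distance x w \<noteq> \<infinity>"
    and minimizing: "limsup (\<lambda>m. asymptotic_distance x (y m)) \<le> asymptotic_distance x w"
  shows "y \<longlonglongrightarrow> w"
proof (rule tendstoI)
  obtain R where R: "asymptotic_distance x w = ereal R"
    using finite asymptotic_distance_nonneg[of x w] by (cases "asymptotic_distance x w") auto
  have "0 \<le> R" using asymptotic_distance_nonneg[of x w] by (simp add: R)
  fix \<epsilon> :: real assume "0 < \<epsilon>"
  obtain \<eta> where "0 < \<eta>" and mid: "\<And>u v z :: 'a. \<epsilon> \<le> norm (u - v) \<Longrightarrow>
      norm (z - u) \<le> R + \<eta> \<Longrightarrow> norm (z - v) \<le> R + \<eta> \<Longrightarrow> norm (z - midpoint u v) \<le> R - \<eta>"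
    using uniformly_convex_midpoint[OF uc \<open>0 \<le> R\<close> \<open>0 < \<epsilon>\<close>] by blast
  have "limsup (\<lambda>m. asymptotic_distance x (y m)) < ereal (R + \<eta>)"
    using minimizing \<open>0 < \<eta>\<close> R by (auto intro: order.strict_trans1)
  then show "\<forall>\<^sub>F m in sequentially. dist (y m) w < \<epsilon>"
  proof (rule Limsup_lessD[THEN eventually_mono])
    fix m assume close: "asymptotic_distance x (y m) < ereal (R + \<eta>)"
    show "dist (y m) w < \<epsilon>"
    proof (rule ccontr)
      assume "\<not> dist (y m) w < \<epsilon>"
      then have far: "\<epsilon> \<le> norm (y m - w)" by (simp add: dist_norm)
      have "asymptotic_distance x w < ereal (R + \<eta>)" using R \<open>0 < \<eta>\<close> by simp
      with close have "eventually (\<lambda>n. norm (x n - y m) < R + \<eta> \<and> norm (x n - w) < R + \<eta>) sequentially"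
        by (intro eventually_conj asymptotic_distance_lessD)
      then have "eventually (\<lambda>n. norm (x n - midpoint (y m) w) \<le> R - \<eta>) sequentially"
        by (rule eventually_mono) (use mid far in auto)
      then have "asymptotic_distance x (midpoint (y m) w) \<le> ereal (R - \<eta>)"
        by (rule asymptotic_distance_le)
      with center[of "midpoint (y m) w"] have "asymptotic_distance x w \<le> ereal (R - \<eta>)"
        by (rule order_trans)
      with R \<open>0 < \<eta>\<close> show False by simp
    qed
  qed
qed

definition uniformly_locally_lipschitzian ::
    "'a::real_normed_vector set \<Rightarrow> real \<Rightarrow> (nat \<Rightarrow> real) \<Rightarrow> ('a \<Rightarrow> 'a) \<Rightarrow> bool" where
  "uniformly_locally_lipschitzian Q r \<beta> T \<longleftrightarrow>
     (\<forall>p\<in>Q. \<forall>p'\<in>Q. \<forall>n\<ge>1. norm (p - p') < r \<longrightarrow>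
        norm ((T ^^ n) p - (T ^^ n) p') \<le> \<beta> n * norm (p - p'))"

lemma uniformly_locally_lipschitzianD:
  "uniformly_locally_lipschitzian Q r \<beta> T \<Longrightarrow> p \<in> Q \<Longrightarrow> p' \<in> Q \<Longrightarrow>
    norm (p - p') < r \<Longrightarrow> 1 \<le> n \<Longrightarrow>
     norm ((T ^^ n) p - (T ^^ n) p') \<le> \<beta> n * norm (p - p')"
  by (simp add: uniformly_locally_lipschitzian_def)

lemma funpow_mem: "T ` Q \<subseteq> Q \<Longrightarrow> x \<in> Q \<Longrightarrow> (T ^^ n) x \<in> Q"
  by (induction n) auto

lemma uniformly_locally_lipschitzian_continuous_on:
  assumes lip: "uniformly_locally_lipschitzian Q r \<beta> T" and "0 < r"
  shows "continuous_on Q T"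
  unfolding continuous_on_iff
proof (intro ballI allI impI)
  fix x e assume "x \<in> Q" "0 < (e::real)"
  define \<delta> where "\<delta> = min r (e / (\<bar>\<beta> 1\<bar> + 1))"
  have "0 < \<delta>" using \<open>0 < r\<close> \<open>0 < e\<close> by (simp add: \<delta>_def)
  moreover have "dist (T x') (T x) < e" if "x' \<in> Q" "dist x' x < \<delta>" for x'
  proof -
    have "dist (T x') (T x) \<le> \<beta> 1 * dist x' x"
      using uniformly_locally_lipschitzianD[OF lip \<open>x' \<in> Q\<close> \<open>x \<in> Q\<close>, of 1] that
      by (simp add: dist_norm \<delta>_def)
    also have "\<dots> \<le> \<bar>\<beta> 1\<bar> * \<delta>"
      using that by (intro mult_mono) auto
    also have "\<dots> \<le> \<bar>\<beta> 1\<bar> * (e / (\<bar>\<beta> 1\<bar> + 1))"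
      by (intro mult_left_mono) (auto simp: \<delta>_def)
    also have "\<dots> < e"
      using \<open>0 < e\<close> by (simp add: field_simps)
    finally show ?thesis .
  qed
  ultimately show "\<exists>\<delta>>0. \<forall>x'\<in>Q. dist x' x < \<delta> \<longrightarrow> dist (T x') (T x) < e" by blast
qed

lemma tendsto_iterate_displacement:
  assumes lip: "uniformly_locally_lipschitzian Q r \<beta> T" and "0 < r" "T ` Q \<subseteq> Q"
    and "\<And>n. x n \<in> Q" and displacement: "(\<lambda>n. x n - T (x n)) \<longlonglongrightarrow> 0"
  shows "(\<lambda>n. x n - (T ^^ m) (x n)) \<longlonglongrightarrow> 0"
proof (induction m)
  case (Suc m)
  have "(\<lambda>n. (T ^^ m) (x n) - (T ^^ m) (T (x n))) \<longlonglongrightarrow> 0"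
  proof (cases "m = 0")
    case False
    have "eventually (\<lambda>n. norm (x n - T (x n)) < r) sequentially"
      using displacement \<open>0 < r\<close> by (auto dest: tendsto_norm_zero order_tendstoD(2))
    then have "eventually (\<lambda>n. norm ((T ^^ m) (x n) - (T ^^ m) (T (x n))) \<le> \<beta> m * norm (x n - T (x n))) sequentially"
      by (rule eventually_mono)
        (use False assms(3,4) in \<open>auto intro!: uniformly_locally_lipschitzianD[OF lip]\<close>)
    moreover have "(\<lambda>n. \<beta> m * norm (x n - T (x n))) \<longlonglongrightarrow> 0"
      using tendsto_mult_right_zero[OF tendsto_norm_zero[OF displacement]] .
    ultimately show ?thesis by (rule Lim_null_comparison)
  qed (use displacement in simp)
  with Suc.IH have "(\<lambda>n. (x n - (T ^^ m) (x n)) + ((T ^^ m) (x n) - (T ^^ m) (T (x n)))) \<longlonglongrightarrow> 0"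
    by (rule tendsto_add_zero)
  then show ?case by (simp only: funpow_Suc_right comp_def) simp
qed simp

lemma asymptotic_distance_iterate_le:
  assumes lip: "uniformly_locally_lipschitzian Q r \<beta> T" and "0 < r" "T ` Q \<subseteq> Q"
    and "\<And>n. x n \<in> Q" "w \<in> Q" and displacement: "(\<lambda>n. x n - T (x n)) \<longlonglongrightarrow> 0"
    and radius: "asymptotic_distance x w < ereal r" and "1 \<le> m" "0 \<le> \<beta> m"
  shows "asymptotic_distance x ((T ^^ m) w) \<le> ereal (\<beta> m) * asymptotic_distance x w"
proof -
  have "eventually (\<lambda>n. ereal (norm (x n - (T ^^ m) w))
      \<le> ereal (norm (x n - (T ^^ m) (x n))) + ereal (\<beta> m) * ereal (norm (x n - w))) sequentially"
    using asymptotic_distance_lessD[OF radius]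
  proof (rule eventually_mono)
    fix n assume "norm (x n - w) < r"
    then have "norm ((T ^^ m) (x n) - (T ^^ m) w) \<le> \<beta> m * norm (x n - w)"
      using assms(4,5,8) by (intro uniformly_locally_lipschitzianD[OF lip])
    then show "ereal (norm (x n - (T ^^ m) w))
        \<le> ereal (norm (x n - (T ^^ m) (x n))) + ereal (\<beta> m) * ereal (norm (x n - w))"
      using norm_triangle_ineq[of "x n - (T ^^ m) (x n)" "(T ^^ m) (x n) - (T ^^ m) w"] by simp
  qed
  then have "asymptotic_distance x ((T ^^ m) w)
      \<le> limsup (\<lambda>n. ereal (norm (x n - (T ^^ m) (x n))) + ereal (\<beta> m) * ereal (norm (x n - w)))"
    unfolding asymptotic_distance_def by (rule Limsup_mono)
  also have "\<dots> = 0 + limsup (\<lambda>n. ereal (\<beta> m) * ereal (norm (x n - w)))"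
  proof (rule ereal_limsup_lim_add)
    show "(\<lambda>n. ereal (norm (x n - (T ^^ m) (x n)))) \<longlonglongrightarrow> 0"
      using tendsto_norm_zero[OF tendsto_iterate_displacement[OF lip assms(2-4) displacement]]
      by (simp add: zero_ereal_def tendsto_ereal)
  qed simp
  also have "\<dots> = ereal (\<beta> m) * asymptotic_distance x w"
    unfolding asymptotic_distance_def by (simp only: add.left_neutral limsup_ereal_mult_left[OF \<open>0 \<le> \<beta> m\<close>])
  finally show ?thesis .
qed

lemma limsup_asymptotic_distance_orbit_le:
  assumes "uniformly_locally_lipschitzian Q r \<beta> T" and "0 < r" "T ` Q \<subseteq> Q"
    and "\<And>n. x n \<in> Q" "w \<in> Q" and "(\<lambda>n. x n - T (x n)) \<longlonglongrightarrow> 0"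
    and "asymptotic_distance x w < ereal r" and "\<And>m. 0 \<le> \<beta> m" "\<beta> \<longlonglongrightarrow> 1"
  shows "limsup (\<lambda>m. asymptotic_distance x ((T ^^ m) w)) \<le> asymptotic_distance x w"
proof -
  have "eventually (\<lambda>m. asymptotic_distance x ((T ^^ m) w) \<le> ereal (\<beta> m) * asymptotic_distance x w)
      sequentially"
    using eventually_ge_at_top[of 1] by (rule eventually_mono)
      (rule asymptotic_distance_iterate_le[OF assms(1-7) _ assms(8)])
  then have "limsup (\<lambda>m. asymptotic_distance x ((T ^^ m) w))
      \<le> limsup (\<lambda>m. ereal (\<beta> m) * asymptotic_distance x w)"
    by (rule Limsup_mono)
  also have "\<dots> = 1 * limsup (\<lambda>_. asymptotic_distance x w)"
    using \<open>\<beta> \<longlonglongrightarrow> 1\<close> by (intro ereal_limsup_lim_mult) (simp_all add: one_ereal_def)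
  also have "\<dots> = asymptotic_distance x w"
    by (simp add: Limsup_const)
  finally show ?thesis .
qed

theorem mainTheorem4:
  fixes Q :: "'a::banach set" and T :: "'a \<Rightarrow> 'a"
    and r :: real and \<beta> :: "nat \<Rightarrow> real"
    and q :: "nat \<Rightarrow> 'a" and w :: 'a
  assumes "uniformly_convex_space TYPE('a)"
    and "opial_condition TYPE('a)"
    and "closed Q" and "convex Q" and "bounded Q"
    and "r > 0"
    and "\<And>n. \<beta> n > 0"
    and "\<beta> \<longlonglongrightarrow> 1"
    and "T ` Q \<subseteq> Q"
    and "\<And>p p' n. p \<in> Q \<Longrightarrow> p' \<in> Q \<Longrightarrow> norm (p - p') < r \<Longrightarrow> n \<ge> 1 \<Longrightarrow>
           norm ((T ^^ n) p - (T ^^ n) p') \<le> \<beta> n * norm (p - p')"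
    and "\<And>n. q n \<in> Q"
    and "weakly_converges q w"
    and "(\<lambda>n. q n - T (q n)) \<longlonglongrightarrow> 0"
    and "asymptotic_radius q Q < ereal r"
  shows "T w = w"
proof -
  have lip: "uniformly_locally_lipschitzian Q r \<beta> T"
    unfolding uniformly_locally_lipschitzian_def using assms(10) by blast
  have "w \<in> Q" using assms(3,4,11,12) by (rule weak_limit_in_closed_convex)
  have center: "\<And>y. asymptotic_distance q w \<le> asymptotic_distance q y"
    using assms(2,12) by (rule opial_asymptotic_center)
  have "asymptotic_distance q w \<le> asymptotic_radius q Q"
    unfolding asymptotic_radius_eq_INF by (rule INF_greatest) (rule center)
  then have radius: "asymptotic_distance q w < ereal r"
    using assms(14) by (rule order.strict_trans1)
  have "limsup (\<lambda>m. asymptotic_distance q ((T ^^ m) w)) \<le> asymptotic_distance q w"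
    using lip assms(6,9,11) \<open>w \<in> Q\<close> assms(13) radius less_imp_le[OF assms(7)] assms(8)
    by (rule limsup_asymptotic_distance_orbit_le)
  then have "(\<lambda>m. (T ^^ m) w) \<longlonglongrightarrow> w"
    using assms(1) center radius by (intro tendsto_asymptotic_center) auto
  with uniformly_locally_lipschitzian_continuous_on[OF lip assms(6)]
  have "(\<lambda>m. T ((T ^^ m) w)) \<longlonglongrightarrow> T w"
    using \<open>w \<in> Q\<close> by (rule continuous_on_tendsto_compose)
      (simp add: funpow_mem[OF assms(9) \<open>w \<in> Q\<close>])
  moreover have "(\<lambda>m. T ((T ^^ m) w)) \<longlonglongrightarrow> w"
    using LIMSEQ_Suc[OF \<open>(\<lambda>m. (T ^^ m) w) \<longlonglongrightarrow> w\<close>] by (simp only: funpow.simps comp_def)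
  ultimately show ?thesis by (rule LIMSEQ_unique)
qed

end
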